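(* Assume the Setting below, let $n$ be the index defined there, let $(n,p,q)\in\Sigma_1$, i.e. $n<2p$ and $n\le q$, and assume that, as $v\to0$, $\Lambda_n(v)=v(\lambda_n+O(v))$ with a constant $\lambda_n\ne0$ and $\Lambda_k(v)=O(v)$ for all $k<2p$. Set $\vartheta_0=(2p-n)/q$, $\kappa_0=\min\{1/q,\vartheta_0\}$, $\xi_0=\mu_{2p}/|\lambda_n+\delta_{n,q}\vartheta_0|$, $\varkappa_0=\min\{\kappa_0,|\lambda_n+\vartheta_0|\}$. Fix an integer $N\in[2p,4p]$. If $\lambda_n+\delta_{n,q}\vartheta_0<0$, then the equation $\frac{du}{dt}=\sum_{k=n}^N t^{-k/q}\Lambda_k(u)$ has a solution $u_0(t)=t^{-\vartheta_0}\zeta_0(t)$, defined for all sufficiently large $t$, such that as $t\to\infty$: $\zeta_0(t)=\xi_0+O(1)$ if $n<q$, and $\zeta_0(t)=\xi_0+O(t^{-(1-\epsilon)\varkappa_0})$ for every $\epsilon\in(0,1)$ if $n=q$.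
   Context: Setting. Let $(\Omega,\mathcal F,\mathbb P)$ carry a 2D Wiener process ${\bf w}$; consider the Itô system $d{\bf z}={\bf a}({\bf z},t)dt+{\bf A}({\bf z},t)d{\bf w}(t)$, $t>s>0$, ${\bf z}=(x,y)^T\in\mathbb R^2$, with deterministic $C^\infty$ coefficients, ${\bf a}(0,t)\equiv0$, ${\bf A}(0,t)\not\equiv0$, globally Lipschitz in ${\bf z}$ uniformly in $t\ge s$ and $\|{\bf A}({\bf z},t)\|\le M(1+|{\bf z}|)$. Assume: ${\bf a}_0=(\partial_yH_0,-\partial_xH_0)^T$ with smooth $H_0=|{\bf z}|^2/2+O(|{\bf z}|^3)$; for some $E_0,r>0$, each level set $\{H_0=E\}\cap\mathcal B_r$, $E\in(0,E_0]$, is a closed curve and the origin is the only equilibrium of $\dot{\bf z}={\bf a}_0({\bf z})$ in $\mathcal B_r=\{|{\bf z}|\le r\}$; ${\bf z}_*(t,E)=(x_*,y_* )$ denotes the periodic solution with $H_0({\bf z}_* )\equiv E$, $x_*(0,E)>0$, $y_*(0,E)=0$, period $2\pi/\nu(E)$, $\nu\ne0$, $\nu(E)=1+O(E)$. There are $q\in\mathbb Z_+$ and smooth ${\bf a}_k,{\bf A}_k$ with ${\bf a}\sim{\bf a}_0+\sum_{k\ge1}t^{-k/q}{\bf a}_k$, ${\bf A}\sim\sum_{k\ge1}t^{-k/q}{\bf A}_k$ as $t\to\infty$ uniformly on $\mathcal B_r$; $p\in\mathbb Z_+$ satisfies ${\bf A}_k(0)=0$ ($k<p$), ${\bf A}_p(0)\neq0$;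 $\mu_{2p}=\frac12\mathrm{tr}({\bf A}_p^T(0){\bf A}_p(0))$. Energy–angle variables: $X(\varphi,E)=x_*(\varphi/\nu(E),E)$, $Y(\varphi,E)=y_*(\varphi/\nu(E),E)$; the inverse map is $E=I(x,y)$, $\varphi=\Phi(x,y)$. Generator: $LU=\partial_tU+(\nabla_{\bf z}U)^T{\bf a}+\frac12\mathrm{tr}({\bf A}^T{\bf H}_{\bf z}(U){\bf A})$, ${\bf H}_{\bf z}$ the Hessian in $(x,y)$. Averaged coefficients: $v_k(E,\varphi)$ ($2\pi$-periodic in $\varphi$ with zero $\varphi$-mean) and $\Lambda_k(E)$ ($k\ge1$) are the functions uniquely determined, order by order in powers of $t^{-1/q}$, by requiring that with $V_N(E,\varphi,t)=E+\sum_{k=1}^Nt^{-k/q}v_k(E,\varphi)$ one has $L[V_N(I(x,y),\Phi(x,y),t)]=\sum_{k=1}^Nt^{-k/q}\Lambda_k(V_N)+O(t^{-(N+1)/q})$ for every $N$ (Taylor-expanding $\Lambda_j(V_N)$ about $E$); in particular $\Lambda_{2p}(E)=\mu_{2p}+O(E)$. The index $n\le2p$ is the smallest integer with $\Lambda_k\equiv0$ for $k<n$ and $\Lambda_n\not\equiv0$. $\delta_{i,j}$ is the Kronecker delta. *)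

theory Defs
  imports "HOL-Analysis.Analysis" "HOL-Library.Landau_Symbols"
begin

definition kdelta :: "nat \<Rightarrow> nat \<Rightarrow> real" where
  "kdelta i j = (if i = j then 1 else 0)"

end

theory Submission
  imports Defs
begin

text \<open>Put \<open>u = t powr (- \<theta>\<^sub>0) * \<zeta>\<close>. The truncated equation becomes
  \<open>\<zeta>' = t powr (- n/q) * (drift * \<zeta> + \<mu>) + O(t powr (- (n+1)/q))\<close> with
  \<open>drift = \<lambda>\<^sub>n + \<delta>\<^sub>n\<^sub>q \<theta>\<^sub>0\<close>: \<open>\<Lambda>\<^sub>n\<close> contributes \<open>\<lambda>\<^sub>n \<zeta>\<close>, \<open>\<Lambda>\<^sub>2\<^sub>p\<close> contributes \<open>\<mu>\<close>, the
  other \<open>\<Lambda>\<^sub>k\<close> are of higher order, and the rescaling contributes \<open>\<theta>\<^sub>0 \<zeta> / t\<close>, which is of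
  the same order exactly when \<open>n = q\<close>. Since \<open>drift < 0\<close> and \<open>n \<le> q\<close>, the equilibrium
  \<open>\<xi>\<^sub>0 = \<mu> / |drift|\<close> attracts at the non-integrable rate \<open>t powr (- n/q) \<ge> 1/t\<close>, so
  comparison with the barriers \<open>\<xi>\<^sub>0 \<plusminus> c t powr (- \<gamma>)\<close> keeps the solution started at \<open>\<xi>\<^sub>0\<close>
  within \<open>\<xi>\<^sub>0 / 2\<close> of it and gives \<open>\<zeta> - \<xi>\<^sub>0 = O(t powr (- \<gamma>))\<close> for every
  \<open>\<gamma> < min (- drift) (1/q)\<close>. The solution itself comes from Picard iteration for the equation
  with the arguments of the \<open>\<Lambda>\<^sub>k\<close> clamped to a neighbourhood of \<open>0\<close>; by the barriers the
  clamp is never active.\<close>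

section \<open>Global solutions of bounded Lipschitz equations\<close>

lemma continuous_on_atLeast_if_Icc:
  fixes f :: "real \<Rightarrow> real"
  assumes "\<And>b. b > T \<Longrightarrow> continuous_on {T..b} f"
  shows "continuous_on {T..} f"
  unfolding continuous_on_eq_continuous_within
proof
  fix x assume x: "x \<in> {T..}"
  have "continuous (at x within {T..x+1}) f"
    using assms[of "x+1"] x by (simp add: continuous_on_eq_continuous_within)
  moreover have "at x within {T..} = at x within {T..x+1}"
    by (rule at_within_nhd[of _ "{..<x+1}"]) auto
  ultimately show "continuous (at x within {T..}) f" by simp
qed

lemma integral_exp_weight_bound:
  fixes h :: "real \<Rightarrow> real"
  assumes x: "T \<le> x" and L: "L > 0" and h: "h integrable_on {T..x}"
    and bound: "\<And>s. s \<in> {T..x} \<Longrightarrow> \<bar>h s\<bar> \<le> L * d * exp (2*L*(s - T))"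
  shows "\<bar>integral {T..x} h\<bar> \<le> d * exp (2*L*(x - T)) / 2"
proof -
  have "0 \<le> L * d" using bound[of T] x by simp
  then have d: "d \<ge> 0" using L by (simp add: zero_le_mult_iff)
  have ftc: "((\<lambda>s. L * d * exp (2*L*(s - T))) has_integral
      (d * exp (2*L*(x - T)) / 2 - d * exp (2*L*(T - T)) / 2)) {T..x}"
  proof (rule fundamental_theorem_of_calculus[OF x])
    fix s
    show "((\<lambda>s. d * exp (2*L*(s - T)) / 2) has_vector_derivative L * d * exp (2*L*(s - T)))
        (at s within {T..x})"
      unfolding has_real_derivative_iff_has_vector_derivative[symmetric]
      by (auto intro!: derivative_eq_intros simp: field_simps)
  qed
  have "\<bar>integral {T..x} h\<bar> \<le> integral {T..x} (\<lambda>s. L * d * exp (2*L*(s - T)))"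
    using integral_norm_bound_integral[OF h has_integral_integrable[OF ftc]] bound by simp
  also have "\<dots> = d * exp (2*L*(x - T)) / 2 - d / 2"
    using integral_unique[OF ftc] by simp
  finally show ?thesis using d by simp
qed

lemma linear_le_exp_weight:
  fixes K L x T :: real
  assumes "L > 0" "K \<ge> 0"
  shows "K * (x - T) \<le> K / (2*L) * exp (2*L*(x - T))"
proof -
  have "2*L*(x - T) \<le> exp (2*L*(x - T))"
    using exp_ge_add_one_self[of "2*L*(x - T)"] by linarith
  then have "K / (2*L) * (2*L*(x - T)) \<le> K / (2*L) * exp (2*L*(x - T))"
    using assms by (intro mult_left_mono) auto
  then show ?thesis using assms by simp
qed

lemma integral_equation_imp_has_derivative:
  fixes F :: "real \<Rightarrow> real \<Rightarrow> real" and u :: "real \<Rightarrow> real"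
  assumes cont: "continuous_on {T..} (\<lambda>s. F s (u s))"
    and eq: "\<And>t. t \<ge> T \<Longrightarrow> u t = u0 + integral {T..t} (\<lambda>s. F s (u s))"
    and t: "t > T"
  shows "(u has_real_derivative F t (u t)) (at t)"
proof -
  have "((\<lambda>x. integral {T..x} (\<lambda>s. F s (u s))) has_real_derivative F t (u t)) (at t within {T..t+1})"
    by (rule integral_has_real_derivative, rule continuous_on_subset[OF cont]) (use t in auto)
  then have "((\<lambda>x. u0 + integral {T..x} (\<lambda>s. F s (u s))) has_real_derivative F t (u t)) (at t)"
    using t by (auto simp: at_within_Icc_at intro!: derivative_eq_intros)
  then show ?thesis
    by (rule has_field_derivative_transform_within_open[of _ _ _ "{T<..}"]) (use t eq in auto)
qed

text \<open>Picard iteration for \<open>u = u0 + \<integral>\<^sub>T F(s, u s) ds\<close> on \<open>\<psi> = u / E\<close> with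
  \<open>E s = exp (2 L (s - T))\<close>: the weight makes the integral operator a \<open>1/2\<close>-contraction
  in the sup norm of bounded continuous functions (extended constantly to the left of \<open>T\<close>).\<close>
lemma bounded_lipschitz_integral_equation_solvable:
  fixes F :: "real \<Rightarrow> real \<Rightarrow> real"
  assumes cont: "\<And>w. continuous_on {T..} w \<Longrightarrow> continuous_on {T..} (\<lambda>s. F s (w s))"
    and bounded: "\<And>t x. t \<ge> T \<Longrightarrow> \<bar>F t x\<bar> \<le> K"
    and lipschitz: "\<And>t x y. t \<ge> T \<Longrightarrow> \<bar>F t x - F t y\<bar> \<le> L * \<bar>x - y\<bar>"
    and L: "L > 0"
  obtains u where "continuous_on {T..} u" "\<And>t. t \<ge> T \<Longrightarrow> u t = u0 + integral {T..t} (\<lambda>s. F s (u s))"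
proof -
  have K: "K \<ge> 0" using bounded[of T 0] by simp
  define E where "E s = exp (2*L*(s - T))" for s
  define I where "I \<psi> x = integral {T..x} (\<lambda>s. F s (E s * apply_bcontfun \<psi> s))" for \<psi> x
  define g where "g \<psi> t = (u0 + I \<psi> (max t T)) / E (max t T)" for \<psi> t
  have Epos: "E s > 0" for s by (simp add: E_def)
  have hcont: "continuous_on {T..} (\<lambda>s. F s (E s * apply_bcontfun \<psi> s))" for \<psi> :: "real \<Rightarrow>\<^sub>C real"
    by (rule cont) (auto intro!: continuous_intros simp: E_def)
  have hint: "(\<lambda>s. F s (E s * apply_bcontfun \<psi> s)) integrable_on {T..x}" for \<psi> x
    by (rule integrable_continuous_real, rule continuous_on_subset[OF hcont]) auto
  have gcont: "continuous_on UNIV (g \<psi>)" for \<psi>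
  proof -
    have "continuous_on {T..} (I \<psi>)"
      unfolding I_def by (intro continuous_on_atLeast_if_Icc indefinite_integral_continuous_1 hint)
    then have "continuous_on {T..} (\<lambda>x. (u0 + I \<psi> x) / E x)"
      unfolding E_def by (intro continuous_intros) auto
    then show ?thesis
      unfolding g_def by (rule continuous_on_compose2[of _ _ _ "\<lambda>t. max t T"]) (auto intro!: continuous_intros)
  qed
  have gbound: "\<bar>g \<psi> t\<bar> \<le> \<bar>u0\<bar> + K / (2*L)" for \<psi> t
  proof -
    define x where "x = max t T"
    have x: "T \<le> x" "1 \<le> E x" using L by (auto simp: x_def E_def)
    have "norm (I \<psi> x) \<le> K * Henstock_Kurzweil_Integration.content (cbox T x)"
      unfolding I_def
      by (rule has_integral_bound[OF K]) (use bounded x hint in \<open>auto intro!: integrable_integral\<close>)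
    also have "\<dots> \<le> K / (2*L) * E x" using linear_le_exp_weight[OF L K] x by (simp add: E_def)
    finally have "\<bar>I \<psi> x\<bar> \<le> K / (2*L) * E x" by simp
    moreover have "\<bar>u0\<bar> \<le> \<bar>u0\<bar> * E x" using x(2) by (simp add: mult_le_cancel_left1)
    ultimately have "\<bar>u0 + I \<psi> x\<bar> \<le> (\<bar>u0\<bar> + K / (2*L)) * E x"
      by (simp add: distrib_right abs_triangle_ineq order_trans[OF abs_triangle_ineq] add_mono)
    then show ?thesis using Epos[of x] by (simp add: g_def x_def[symmetric] abs_divide divide_le_eq)
  qed
  define \<Phi> where "\<Phi> \<psi> = Bcontfun (g \<psi>)" for \<psi>
  have \<Phi>: "apply_bcontfun (\<Phi> \<psi>) = g \<psi>" for \<psi>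
  proof -
    have "g \<psi> \<in> bcontfun" by (rule bcontfun_normI[OF gcont]) (use gbound in simp)
    then show ?thesis unfolding \<Phi>_def by (simp add: Bcontfun_inverse)
  qed
  have "dist (\<Phi> \<psi>1) (\<Phi> \<psi>2) \<le> 1/2 * dist \<psi>1 \<psi>2" for \<psi>1 \<psi>2
  proof (rule dist_bound)
    fix t
    define x where "x = max t T"
    let ?d = "dist \<psi>1 \<psi>2"
    have "\<bar>I \<psi>1 x - I \<psi>2 x\<bar> \<le> ?d * E x / 2"
      unfolding I_def integral_diff[OF hint[of \<psi>1] hint[of \<psi>2], symmetric] E_def[of x]
    proof (rule integral_exp_weight_bound[OF _ L integrable_diff[OF hint[of \<psi>1] hint[of \<psi>2]]])
      fix s assume "s \<in> {T..x}"
      then have "\<bar>F s (E s * \<psi>1 s) - F s (E s * \<psi>2 s)\<bar> \<le> L * (E s * \<bar>\<psi>1 s - \<psi>2 s\<bar>)"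
        using lipschitz[of s "E s * \<psi>1 s" "E s * \<psi>2 s"] Epos[of s]
        by (simp add: right_diff_distrib[symmetric] abs_mult)
      also have "\<dots> \<le> L * (E s * ?d)"
        using dist_bounded[of \<psi>1 s \<psi>2] L Epos[of s] by (simp add: dist_real_def)
      finally show "\<bar>F s (E s * \<psi>1 s) - F s (E s * \<psi>2 s)\<bar> \<le> L * ?d * exp (2*L*(s - T))"
        by (simp add: E_def mult_ac)
    qed (simp add: x_def)
    then show "dist (\<Phi> \<psi>1 t) (\<Phi> \<psi>2 t) \<le> 1/2 * ?d"
      using Epos[of x] by (simp add: \<Phi> g_def x_def[symmetric] dist_real_def
          diff_divide_distrib[symmetric] abs_divide divide_le_eq)
  qed
  then obtain \<psi> where fixed: "\<Phi> \<psi> = \<psi>" using banach_fix_type[of "1/2" \<Phi>] by auto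
  define u where "u t = E t * apply_bcontfun \<psi> t" for t
  have ueq: "u t = u0 + I \<psi> t" if "t \<ge> T" for t
  proof -
    have "apply_bcontfun \<psi> t = g \<psi> t" using fixed \<Phi> by metis
    then show ?thesis using that Epos[of t] by (simp add: u_def g_def max_def)
  qed
  show ?thesis
  proof (rule that)
    show "continuous_on {T..} u" unfolding u_def E_def by (intro continuous_intros) simp
    show "u t = u0 + integral {T..t} (\<lambda>s. F s (u s))" if "t \<ge> T" for t
      using ueq[OF that] by (simp add: I_def u_def)
  qed
qed

lemma bounded_lipschitz_ode_solution_exists:
  fixes F :: "real \<Rightarrow> real \<Rightarrow> real"
  assumes cont: "\<And>w. continuous_on {T..} w \<Longrightarrow> continuous_on {T..} (\<lambda>s. F s (w s))"
    and bounded: "\<And>t x. t \<ge> T \<Longrightarrow> \<bar>F t x\<bar> \<le> K"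
    and lipschitz: "\<And>t x y. t \<ge> T \<Longrightarrow> \<bar>F t x - F t y\<bar> \<le> L * \<bar>x - y\<bar>"
    and L: "L > 0"
  shows "\<exists>u. continuous_on {T..} u \<and> u T = u0 \<and> (\<forall>t>T. (u has_real_derivative F t (u t)) (at t))"
proof -
  obtain u where u: "continuous_on {T..} u"
    and eq: "\<And>t. t \<ge> T \<Longrightarrow> u t = u0 + integral {T..t} (\<lambda>s. F s (u s))"
    using bounded_lipschitz_integral_equation_solvable[OF cont bounded lipschitz L] by blast
  have "(u has_real_derivative F t (u t)) (at t)" if "t > T" for t
    using integral_equation_imp_has_derivative[where F = F and u = u, OF cont[OF u] eq that] .
  then show ?thesis using u eq[of T] by auto
qed

section \<open>Barriers at an attracting equilibrium\<close>

lemma first_zero_crossing: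
  fixes h :: "real \<Rightarrow> real"
  assumes "a \<le> t" and cont: "continuous_on {a..t} h" and ha: "h a < 0" and ht: "h t \<ge> 0"
  obtains s where "a < s" "s \<le> t" "h s = 0" "\<And>x. a \<le> x \<Longrightarrow> x < s \<Longrightarrow> h x < 0"
proof -
  define S where "S = {a..t} \<inter> h -` {0..}"
  have "closed S" unfolding S_def by (rule continuous_closed_preimage[OF cont]) auto
  moreover have "S \<noteq> {}" using \<open>a \<le> t\<close> ht unfolding S_def by auto
  moreover have bdd: "bdd_below S" unfolding S_def by (rule bdd_belowI[of _ a]) auto
  ultimately have sS: "Inf S \<in> S" using closed_contains_Inf by blast
  have below: "h x < 0" if "a \<le> x" "x < Inf S" for x
  proof (rule ccontr)
    assume "\<not> h x < 0"
    then have "x \<in> S" using that sS unfolding S_def by auto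
    then show False using cInf_lower[OF _ bdd] that by fastforce
  qed
  have s: "a \<le> Inf S" "Inf S \<le> t" "h (Inf S) \<ge> 0" using sS unfolding S_def by auto
  then have as: "a < Inf S" using ha by (cases "Inf S = a") auto
  have "h (Inf S) = 0"
  proof (rule ccontr)
    assume "h (Inf S) \<noteq> 0"
    then have pos: "h (Inf S) > 0" using s by simp
    obtain x where "a \<le> x" "x \<le> Inf S" "h x = 0"
      using IVT'[of h a 0 "Inf S"] ha pos as continuous_on_subset[OF cont] s by fastforce
    then show False using below[of x] pos by (cases "x = Inf S") auto
  qed
  then show ?thesis using that as s below by blast
qed

lemma negative_if_decreasing_at_zeros:
  fixes h :: "real \<Rightarrow> real"
  assumes cont: "continuous_on {a..} h" and ha: "h a < 0"
    and decreasing: "\<And>s. s > a \<Longrightarrow> h s = 0 \<Longrightarrow> \<exists>d. d < 0 \<and> (h has_real_derivative d) (at s)"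
    and t: "t \<ge> a"
  shows "h t < 0"
proof (rule ccontr)
  assume "\<not> h t < 0"
  moreover have "continuous_on {a..t} h" using cont by (rule continuous_on_subset) auto
  ultimately obtain s where s: "a < s" "h s = 0" and below: "\<And>x. a \<le> x \<Longrightarrow> x < s \<Longrightarrow> h x < 0"
    using first_zero_crossing[of a t h] t ha by (metis linorder_not_less)
  obtain d where "d < 0" "(h has_real_derivative d) (at s)" using decreasing s by blast
  then obtain e where e: "e > 0" "\<And>y. 0 < y \<Longrightarrow> y < e \<Longrightarrow> h s < h (s - y)"
    using DERIV_neg_dec_left by blast
  define y where "y = min (e/2) ((s - a)/2)"
  have "0 < y" "y < e" using e s by (auto simp: y_def)
  moreover have "a \<le> s - y" using s by (simp add: y_def min_def field_simps)
  ultimately show False using e(2)[of y] below[of "s - y"] s by simp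
qed

lemma eventually_mult_powr_less:
  fixes K e \<delta> :: real
  assumes "\<delta> > 0" "e > 0"
  shows "eventually (\<lambda>t. K * t powr (- \<delta>) < e) at_top"
proof -
  have "((\<lambda>t. K * t powr (- \<delta>)) \<longlongrightarrow> K * 0) at_top"
    using assms by (intro tendsto_mult tendsto_const tendsto_neg_powr filterlim_ident) auto
  then show ?thesis using assms by (auto dest: order_tendstoD(2))
qed

text \<open>\<open>\<zeta>\<close> solves \<open>\<zeta>' = G t \<zeta>\<close> while it stays in \<open>(0, Z]\<close>, and there \<open>G t z\<close> is
  \<open>t powr (- \<alpha>) * (a z + \<mu>)\<close> up to a relative error \<open>K t powr (- \<beta>)\<close>. The barriers
  exploit that for \<open>a < 0\<close> and \<open>\<alpha> \<le> 1\<close> the attraction towards \<open>\<xi>\<close> is not integrable in \<open>t\<close>.\<close>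
locale attracting_equilibrium =
  fixes G :: "real \<Rightarrow> real \<Rightarrow> real" and \<zeta> :: "real \<Rightarrow> real"
    and a \<mu> \<xi> Z \<alpha> \<beta> K T :: real
  assumes T: "T \<ge> 1" and equilibrium: "a * \<xi> + \<mu> = 0"
    and \<xi>: "\<xi> > 0" and Z: "3 * \<xi> / 2 \<le> Z" and \<alpha>: "0 \<le> \<alpha>" "\<alpha> \<le> 1"
    and cont: "continuous_on {T..} \<zeta>"
    and deriv: "\<And>t. t > T \<Longrightarrow> 0 < \<zeta> t \<Longrightarrow> \<zeta> t \<le> Z \<Longrightarrow> (\<zeta> has_real_derivative G t (\<zeta> t)) (at t)"
    and field: "\<And>t z. t \<ge> T \<Longrightarrow> 0 < z \<Longrightarrow> z \<le> Z \<Longrightarrow>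
      \<bar>G t z - t powr (- \<alpha>) * (a * z + \<mu>)\<bar> \<le> K * t powr (- \<alpha>) * t powr (- \<beta>)"
begin

lemma crossing_speed_negative:
  assumes \<sigma>: "\<sigma> = 1 \<or> \<sigma> = -1" and s: "s \<ge> T" and \<gamma>: "0 \<le> \<gamma>" and X: "0 < X" "X \<le> \<xi> / 2"
    and small: "K * s powr (- \<beta>) < (- a - \<gamma>) * X"
  defines "W \<equiv> \<xi> + \<sigma> * X"
  shows "\<sigma> * G s W + \<gamma> * X / s < 0"
proof -
  have s1: "s \<ge> 1" using s T by simp
  have W: "0 < W" "W \<le> Z" using \<sigma> X \<xi> Z by (auto simp: W_def)
  have lin: "\<sigma> * (a * W + \<mu>) = a * X" using \<sigma> equilibrium by (auto simp: W_def algebra_simps)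
  have neg: "a * X + K * s powr (- \<beta>) < - \<gamma> * X" using small by (simp add: algebra_simps)
  have "\<sigma> * G s W \<le> \<sigma> * (s powr (- \<alpha>) * (a * W + \<mu>)) + K * s powr (- \<alpha>) * s powr (- \<beta>)"
    using field[OF s W] \<sigma> by (auto simp: abs_le_iff)
  also have "\<dots> = s powr (- \<alpha>) * (a * X) + K * s powr (- \<alpha>) * s powr (- \<beta>)"
    by (simp only: mult.left_commute[of \<sigma>] lin)
  also have "\<dots> = s powr (- \<alpha>) * (a * X + K * s powr (- \<beta>))"
    by (simp add: algebra_simps)
  also have "\<dots> \<le> s powr (-1) * (a * X + K * s powr (- \<beta>))"
    using neg mult_nonneg_nonneg[OF \<gamma> less_imp_le[OF X(1)]] s1 \<alpha>
    by (intro mult_right_mono_neg powr_mono) auto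
  also have "\<dots> < s powr (-1) * (- \<gamma> * X)"
    using neg s1 by (intro mult_strict_left_mono) auto
  finally show ?thesis using s1 by (simp add: powr_minus divide_inverse mult_ac)
qed

lemma one_sided_barrier:
  assumes \<sigma>: "\<sigma> = 1 \<or> \<sigma> = -1" and T0: "T0 \<ge> T" and \<gamma>: "0 \<le> \<gamma>" and c: "c > 0"
    and room: "\<And>t. t \<ge> T0 \<Longrightarrow> c * t powr (- \<gamma>) \<le> \<xi> / 2"
    and small: "\<And>t. t \<ge> T0 \<Longrightarrow> K * t powr (- \<beta>) < (- a - \<gamma>) * (c * t powr (- \<gamma>))"
    and start: "\<sigma> * (\<zeta> T0 - \<xi>) < c * T0 powr (- \<gamma>)"
    and t: "t \<ge> T0"
  shows "\<sigma> * (\<zeta> t - \<xi>) < c * t powr (- \<gamma>)"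
proof -
  let ?h = "\<lambda>s. \<sigma> * (\<zeta> s - \<xi>) - c * s powr (- \<gamma>)"
  have "?h t < 0"
  proof (rule negative_if_decreasing_at_zeros[OF _ _ _ t])
    show "continuous_on {T0..} ?h"
      using T T0 by (intro continuous_intros continuous_on_subset[OF cont]) auto
    show "?h T0 < 0" using start by simp
  next
    fix s assume s: "s > T0" "?h s = 0"
    define X where "X = c * s powr (- \<gamma>)"
    have s1: "s \<ge> 1" "s > T" using s T0 T by auto
    have X: "0 < X" "X \<le> \<xi> / 2" using c s1 room[of s] s by (auto simp: X_def)
    have \<zeta>s: "\<zeta> s = \<xi> + \<sigma> * X" using s(2) \<sigma> by (auto simp: X_def)
    then have "0 < \<zeta> s" "\<zeta> s \<le> Z" using \<sigma> X \<xi> Z by auto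
    then have "(\<zeta> has_real_derivative G s (\<zeta> s)) (at s)" using deriv[OF s1(2)] by simp
    moreover have "\<gamma> * s powr (- \<gamma> - 1) * c = \<gamma> * X / s"
      using s1 by (simp add: X_def powr_diff)
    ultimately have "(?h has_real_derivative \<sigma> * G s (\<zeta> s) + \<gamma> * X / s) (at s)"
      using s1 by (auto intro!: derivative_eq_intros)
    moreover have "\<sigma> * G s (\<zeta> s) + \<gamma> * X / s < 0"
      unfolding \<zeta>s using small[of s] s X \<sigma> \<gamma> T0
      by (intro crossing_speed_negative) (auto simp: X_def)
    ultimately show "\<exists>d<0. (?h has_real_derivative d) (at s)" by blast
  qed
  then show ?thesis by simp
qed

lemma two_sided_barrier:
  assumes T0: "T0 \<ge> T" and \<gamma>: "0 \<le> \<gamma>" and c: "c > 0"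
    and room: "\<And>t. t \<ge> T0 \<Longrightarrow> c * t powr (- \<gamma>) \<le> \<xi> / 2"
    and small: "\<And>t. t \<ge> T0 \<Longrightarrow> K * t powr (- \<beta>) < (- a - \<gamma>) * (c * t powr (- \<gamma>))"
    and start: "\<bar>\<zeta> T0 - \<xi>\<bar> < c * T0 powr (- \<gamma>)"
    and t: "t \<ge> T0"
  shows "\<bar>\<zeta> t - \<xi>\<bar> < c * t powr (- \<gamma>)"
  using one_sided_barrier[of 1, OF _ T0 \<gamma> c room small _ t]
    one_sided_barrier[of "-1", OF _ T0 \<gamma> c room small _ t] start
  by (auto simp: abs_less_iff)

lemma stays_near_equilibrium:
  assumes start: "\<zeta> T = \<xi>"
    and small: "\<And>t. t \<ge> T \<Longrightarrow> K * t powr (- \<beta>) < - a * (\<xi> / 2)"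
    and t: "t \<ge> T"
  shows "\<bar>\<zeta> t - \<xi>\<bar> < \<xi> / 2"
  using two_sided_barrier[of T 0 "\<xi> / 2"] start small t T \<xi> by simp

lemma power_decay:
  assumes near: "\<And>t. t \<ge> T \<Longrightarrow> \<bar>\<zeta> t - \<xi>\<bar> < \<xi> / 2"
    and \<gamma>: "0 \<le> \<gamma>" "\<gamma> < - a" "\<gamma> < \<beta>"
  shows "(\<lambda>t. \<zeta> t - \<xi>) \<in> O[at_top](\<lambda>t. t powr (- \<gamma>))"
proof -
  obtain T1 where T1: "\<And>t. t \<ge> T1 \<Longrightarrow> K * t powr (- (\<beta> - \<gamma>)) < (- a - \<gamma>) * (\<xi> / 2)"
    using eventually_mult_powr_less[of "\<beta> - \<gamma>" "(- a - \<gamma>) * (\<xi> / 2)" K] \<gamma> \<xi>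
    unfolding eventually_at_top_linorder by auto
  define T0 where "T0 = max T1 T"
  define c where "c = \<xi> / 2 * T0 powr \<gamma>"
  have T0: "T0 \<ge> T" "T0 \<ge> 1" using T by (auto simp: T0_def)
  have c: "c > 0" and cT0: "c * T0 powr (- \<gamma>) = \<xi> / 2"
    using \<xi> T0 by (auto simp: c_def powr_minus)
  have room: "c * t powr (- \<gamma>) \<le> \<xi> / 2" if "t \<ge> T0" for t
    using mult_left_mono[OF powr_mono2'[of "- \<gamma>" T0 t]] c that T0 \<gamma> cT0 by auto
  have small: "K * t powr (- \<beta>) < (- a - \<gamma>) * (c * t powr (- \<gamma>))" if t: "t \<ge> T0" for t
  proof -
    have "K * t powr (- \<beta>) = t powr (- \<gamma>) * (K * t powr (- (\<beta> - \<gamma>)))"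
      using t T0 by (simp add: powr_add[symmetric])
    also have "\<dots> < t powr (- \<gamma>) * ((- a - \<gamma>) * (\<xi> / 2))"
      using T1[of t] t T0 by (intro mult_strict_left_mono) (auto simp: T0_def)
    also have "\<dots> \<le> t powr (- \<gamma>) * ((- a - \<gamma>) * (\<xi> / 2 * T0 powr \<gamma>))"
      using T0 \<gamma> \<xi> by (intro mult_left_mono) (auto intro!: ge_one_powr_ge_zero)
    finally show ?thesis by (simp add: c_def mult_ac)
  qed
  have "\<bar>\<zeta> t - \<xi>\<bar> \<le> c * t powr (- \<gamma>)" if "t \<ge> T0" for t
    using two_sided_barrier[OF T0(1) \<gamma>(1) c room small _ that] near[OF T0(1)] cT0 by simp
  then show ?thesis
    by (intro bigoI[where c = c]) (auto simp: eventually_at_top_linorder intro!: exI[of _ T0])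
qed

end

section \<open>The truncated averaged equation\<close>

lemma sum_weighted_abs_le:
  fixes c f :: "nat \<Rightarrow> real"
  assumes "\<And>k. k \<in> A \<Longrightarrow> 0 \<le> c k \<and> c k \<le> 1" and "\<And>k. k \<in> A \<Longrightarrow> \<bar>f k\<bar> \<le> B"
  shows "\<bar>\<Sum>k\<in>A. c k * f k\<bar> \<le> real (card A) * B"
proof -
  have "\<bar>\<Sum>k\<in>A. c k * f k\<bar> \<le> (\<Sum>k\<in>A. \<bar>c k * f k\<bar>)" by (rule sum_abs)
  also have "\<dots> \<le> (\<Sum>k\<in>A. B)"
  proof (rule sum_mono)
    fix k assume k: "k \<in> A"
    have "\<bar>c k * f k\<bar> \<le> 1 * \<bar>f k\<bar>"
      using assms(1)[OF k] by (simp add: abs_mult mult_left_le_one_le)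
    then show "\<bar>c k * f k\<bar> \<le> B" using assms(2)[OF k] by simp
  qed
  finally show ?thesis by simp
qed

locale averaged_equation =
  fixes \<Lambda> \<Lambda>' :: "nat \<Rightarrow> real \<Rightarrow> real" and n p q N :: nat and \<mu> lam r0 :: real
  assumes q_pos: "q \<ge> 1" and r0_pos: "r0 > 0"
    and smooth: "\<And>k v. v \<in> {-r0<..<r0} \<Longrightarrow> (\<Lambda> k has_real_derivative \<Lambda>' k v) (at v)"
    and smooth_cont: "\<And>k. continuous_on {-r0<..<r0} (\<Lambda>' k)"
    and mu_pos: "\<mu> > 0"
    and Lambda_2p: "(\<lambda>E. \<Lambda> (2*p) E - \<mu>) \<in> O[at 0](\<lambda>E. E)"
    and Sigma1: "n < 2*p" "n \<le> q"
    and Lambda_n: "(\<lambda>v. \<Lambda> n v - v * lam) \<in> O[at 0](\<lambda>v. v^2)"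
    and Lambda_k: "\<And>k. k < 2*p \<Longrightarrow> \<Lambda> k \<in> O[at 0](\<lambda>v. v)"
    and N_ge: "2*p \<le> N"
    and neg: "lam + kdelta n q * ((real (2*p) - real n) / real q) < 0"
begin

definition theta0 :: real where "theta0 = (real (2*p) - real n) / real q"

definition drift :: real where "drift = lam + kdelta n q * theta0"

definition xi0 :: real where "xi0 = \<mu> / \<bar>drift\<bar>"

lemma theta0_eq: "theta0 = real (2*p - n) / real q"
  using Sigma1 by (simp add: theta0_def of_nat_diff)

lemma theta0_ge: "theta0 \<ge> 1 / real q"
  using Sigma1 q_pos by (simp add: theta0_eq divide_right_mono)

lemma theta0_pos: "theta0 > 0"
proof -
  have "1 / real q > 0" using q_pos by simp
  then show ?thesis using theta0_ge by linarith
qed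

lemma drift_neg: "drift < 0"
  using neg by (simp add: drift_def theta0_def)

lemma xi0_pos: "xi0 > 0"
  using mu_pos drift_neg unfolding xi0_def by (intro divide_pos_pos) auto

lemma drift_equilibrium: "drift * xi0 + \<mu> = 0"
  using drift_neg by (simp add: xi0_def)

lemma Lambda_local_bounds:
  obtains \<delta> C where "\<delta> > 0" "C \<ge> 0"
    and "\<And>v. 0 < v \<Longrightarrow> v < \<delta> \<Longrightarrow> \<bar>\<Lambda> n v - v * lam\<bar> \<le> C * v^2 \<and> \<bar>\<Lambda> (2*p) v - \<mu>\<bar> \<le> C * v
        \<and> (\<forall>k<2*p. \<bar>\<Lambda> k v\<bar> \<le> C * v)"
proof -
  have "(\<lambda>v. \<Sum>k<2*p. \<bar>\<Lambda> k v\<bar>) \<in> O[at 0](\<lambda>v. v)"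
    using Lambda_k by (intro big_sum_in_bigo) simp
  then obtain c3 where c3: "eventually (\<lambda>v. norm (\<Sum>k<2*p. \<bar>\<Lambda> k v\<bar>) \<le> c3 * norm v) (at 0)"
    by (rule landau_o.bigE)
  obtain c1 where c1: "eventually (\<lambda>v. norm (\<Lambda> n v - v * lam) \<le> c1 * norm (v^2)) (at 0)"
    using Lambda_n by (rule landau_o.bigE)
  obtain c2 where c2: "eventually (\<lambda>v. norm (\<Lambda> (2*p) v - \<mu>) \<le> c2 * norm v) (at 0)"
    using Lambda_2p by (rule landau_o.bigE)
  define C where "C = \<bar>c1\<bar> + \<bar>c2\<bar> + \<bar>c3\<bar>"
  have "eventually (\<lambda>v. 0 < v \<longrightarrow> \<bar>\<Lambda> n v - v * lam\<bar> \<le> C * v^2 \<and> \<bar>\<Lambda> (2*p) v - \<mu>\<bar> \<le> C * v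
      \<and> (\<forall>k<2*p. \<bar>\<Lambda> k v\<bar> \<le> C * v)) (at 0)"
    using c1 c2 c3
  proof eventually_elim
    case (elim v)
    show ?case
    proof (intro impI conjI allI)
      assume v: "0 < v"
      have C: "c1 * v^2 \<le> C * v^2" "c2 * v \<le> C * v" "c3 * v \<le> C * v"
        using v by (auto intro!: mult_right_mono simp: C_def)
      have bounds: "\<bar>\<Lambda> n v - v * lam\<bar> \<le> c1 * v^2" "\<bar>\<Lambda> (2*p) v - \<mu>\<bar> \<le> c2 * v"
        "(\<Sum>k<2*p. \<bar>\<Lambda> k v\<bar>) \<le> c3 * v"
        using elim v by auto
      then show "\<bar>\<Lambda> n v - v * lam\<bar> \<le> C * v^2" "\<bar>\<Lambda> (2*p) v - \<mu>\<bar> \<le> C * v"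
        using C by linarith+
      fix k assume "k < 2*p"
      then have "\<bar>\<Lambda> k v\<bar> \<le> (\<Sum>k<2*p. \<bar>\<Lambda> k v\<bar>)" by (intro member_le_sum) auto
      then show "\<bar>\<Lambda> k v\<bar> \<le> C * v" using bounds(3) C(3) by linarith
    qed
  qed
  then obtain \<delta> where "\<delta> > 0" and "\<forall>v. v \<noteq> 0 \<and> dist v 0 < \<delta> \<longrightarrow> 0 < v \<longrightarrow>
      \<bar>\<Lambda> n v - v * lam\<bar> \<le> C * v^2 \<and> \<bar>\<Lambda> (2*p) v - \<mu>\<bar> \<le> C * v \<and> (\<forall>k<2*p. \<bar>\<Lambda> k v\<bar> \<le> C * v)"
    unfolding eventually_at by auto
  then show ?thesis by (intro that[of \<delta> C]) (auto simp: dist_real_def C_def)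
qed

lemma Lambda_continuous_on:
  assumes "r < r0"
  shows "continuous_on {-r..r} (\<Lambda> k)"
proof (rule continuous_at_imp_continuous_on, intro ballI)
  fix v assume "v \<in> {-r..r}"
  then have "v \<in> {-r0<..<r0}" using assms r0_pos by auto
  then show "isCont (\<Lambda> k) v" by (rule DERIV_isCont[OF smooth])
qed

lemma Lambda_uniform_bounds:
  assumes r: "0 < r" "r < r0"
  obtains B D where "B > 0" "D > 0" "\<And>k v. k \<le> N \<Longrightarrow> v \<in> {-r..r} \<Longrightarrow> \<bar>\<Lambda> k v\<bar> \<le> B"
    and "\<And>k x y. k \<le> N \<Longrightarrow> x \<in> {-r..r} \<Longrightarrow> y \<in> {-r..r} \<Longrightarrow> \<bar>\<Lambda> k x - \<Lambda> k y\<bar> \<le> D * \<bar>x - y\<bar>"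
proof -
  have sub: "{-r..r} \<subseteq> {-r0<..<r0}" using r by auto
  have "compact (\<Union>k\<in>{..N}. \<Lambda> k ` {-r..r})"
    using Lambda_continuous_on[OF r(2)]
    by (intro compact_UN finite_atMost compact_continuous_image compact_Icc)
  then obtain B where B: "B > 0" "\<forall>x\<in>(\<Union>k\<in>{..N}. \<Lambda> k ` {-r..r}). norm x \<le> B"
    using compact_imp_bounded bounded_pos by metis
  have "compact (\<Union>k\<in>{..N}. \<Lambda>' k ` {-r..r})"
    using continuous_on_subset[OF smooth_cont sub]
    by (intro compact_UN finite_atMost compact_continuous_image compact_Icc)
  then obtain D where D: "D > 0" "\<forall>x\<in>(\<Union>k\<in>{..N}. \<Lambda>' k ` {-r..r}). norm x \<le> D"
    using compact_imp_bounded bounded_pos by metis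
  have "norm (\<Lambda> k x - \<Lambda> k y) \<le> D * norm (x - y)"
    if "k \<le> N" "x \<in> {-r..r}" "y \<in> {-r..r}" for k x y
  proof (rule field_differentiable_bound[of "{-r..r}"])
    fix v assume "v \<in> {-r..r}"
    then have "v \<in> {-r0<..<r0}" using sub by blast
    then show "(\<Lambda> k has_field_derivative \<Lambda>' k v) (at v within {-r..r})"
      by (rule has_field_derivative_at_within[OF smooth])
    show "norm (\<Lambda>' k v) \<le> D" using D(2) \<open>v \<in> {-r..r}\<close> \<open>k \<le> N\<close> by auto
  qed (use that in auto)
  then show ?thesis using that B D by auto
qed

lemma rescaled_term_estimate:
  fixes w z v Z C B :: real
  assumes w: "0 < w" "w \<le> 1" and z: "0 < z" "z \<le> Z" and v: "v = w^(2*p - n) * z"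
    and C: "C \<ge> 0" and B: "B \<ge> 0"
    and near_n: "\<bar>\<Lambda> n v - v * lam\<bar> \<le> C * v^2"
    and near_2p: "\<bar>\<Lambda> (2*p) v - \<mu>\<bar> \<le> C * v"
    and near_k: "\<And>k. k < 2*p \<Longrightarrow> \<bar>\<Lambda> k v\<bar> \<le> C * v"
    and bounded: "\<And>k. k \<le> N \<Longrightarrow> \<bar>\<Lambda> k v\<bar> \<le> B"
    and k: "k \<in> {n..N}"
  shows "\<bar>w^k * \<Lambda> k v - (if k = n then w^(2*p) * lam * z else 0)
      - (if k = 2*p then w^(2*p) * \<mu> else 0)\<bar> \<le> (C * Z^2 + C * Z + B) * w^(2*p+1)"
    (is "\<bar>?err\<bar> \<le> _")
proof -
  define m where "m = 2*p - n"
  have m: "m \<ge> 1" "n + m = 2*p" using Sigma1 by (auto simp: m_def)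
  have vm: "v = w^m * z" by (simp add: v m_def)
  have wsplit: "w^(2*p) = w^n * w^m" by (simp add: m(2)[symmetric] power_add)
  have small: "Y * w^j \<le> (C * Z^2 + C * Z + B) * w^(2*p+1)"
    if "0 \<le> Y" "Y \<le> C * Z^2 + C * Z + B" "2*p + 1 \<le> j" for Y j
    using that w by (intro mult_mono power_decreasing) auto
  have CZ: "C * z \<le> C * Z" "C * z^2 \<le> C * Z^2" "0 \<le> C * Z" "0 \<le> C * Z^2"
    using C z by (auto intro!: mult_left_mono power_mono)
  consider "k = n" | "n < k" "k < 2*p" | "k = 2*p" | "2*p < k" using k Sigma1 by force
  then show ?thesis
  proof cases
    case 1
    have "w^(2*p) * lam * z = w^n * (v * lam)" unfolding wsplit vm by (simp add: mult_ac)
    then have "?err = w^n * (\<Lambda> n v - v * lam)" using 1 Sigma1 by (simp add: right_diff_distrib)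
    then have "\<bar>?err\<bar> = w^n * \<bar>\<Lambda> n v - v * lam\<bar>" using w by (simp add: abs_mult)
    also have "\<dots> \<le> w^n * (C * v^2)" using near_n w by (intro mult_left_mono) auto
    also have "\<dots> = C * z^2 * w^(2*p + m)"
      unfolding power_add wsplit vm by (simp add: power2_eq_square mult_ac)
    finally show ?thesis using small[of "C * z^2" "2*p + m"] CZ B C m by force
  next
    case 2
    have "\<bar>?err\<bar> = w^k * \<bar>\<Lambda> k v\<bar>" using 2 w by (simp add: abs_mult)
    also have "\<dots> \<le> w^k * (C * v)" using near_k[OF 2(2)] w by (intro mult_left_mono) auto
    also have "\<dots> = C * z * w^(k + m)" by (simp add: vm power_add algebra_simps)
    finally show ?thesis using small[of "C * z" "k + m"] 2 CZ B C z m by force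
  next
    case 3
    have "\<bar>?err\<bar> = w^(2*p) * \<bar>\<Lambda> (2*p) v - \<mu>\<bar>"
      using 3 Sigma1 w by (simp add: right_diff_distrib[symmetric] abs_mult)
    also have "\<dots> \<le> w^(2*p) * (C * v)" using near_2p w by (intro mult_left_mono) auto
    also have "\<dots> = C * z * w^(2*p + m)" by (simp add: vm power_add algebra_simps)
    finally show ?thesis using small[of "C * z" "2*p + m"] CZ B C z m by force
  next
    case 4
    have "\<bar>?err\<bar> = \<bar>\<Lambda> k v\<bar> * w^k" using 4 Sigma1 w by (simp add: abs_mult)
    also have "\<dots> \<le> B * w^k" using bounded[of k] k w by (intro mult_right_mono) auto
    finally show ?thesis using small[of B k] 4 CZ B by force
  qed
qed

lemma rescaled_sum_estimate:
  fixes w z v Z C B :: real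
  assumes w: "0 < w" "w \<le> 1" and z: "0 < z" "z \<le> Z" and v: "v = w^(2*p - n) * z"
    and C: "C \<ge> 0" and B: "B \<ge> 0"
    and near_n: "\<bar>\<Lambda> n v - v * lam\<bar> \<le> C * v^2"
    and near_2p: "\<bar>\<Lambda> (2*p) v - \<mu>\<bar> \<le> C * v"
    and near_k: "\<And>k. k < 2*p \<Longrightarrow> \<bar>\<Lambda> k v\<bar> \<le> C * v"
    and bounded: "\<And>k. k \<le> N \<Longrightarrow> \<bar>\<Lambda> k v\<bar> \<le> B"
  shows "\<bar>(\<Sum>k=n..N. w^k * \<Lambda> k v) - w^(2*p) * (lam * z + \<mu>)\<bar>
           \<le> real (N + 1) * ((C * Z^2 + C * Z + B) * w^(2*p+1))"
proof -
  define \<beta> where "\<beta> = (C * Z^2 + C * Z + B) * w^(2*p+1)"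
  define err where "err k = w^k * \<Lambda> k v - (if k = n then w^(2*p) * lam * z else 0)
      - (if k = 2*p then w^(2*p) * \<mu> else 0)" for k
  have "\<bar>\<Sum>k=n..N. err k\<bar> \<le> real (card {n..N}) * \<beta>"
    using sum_weighted_abs_le[of "{n..N}" "\<lambda>_. 1" err \<beta>]
      rescaled_term_estimate[OF w z v C B near_n near_2p near_k bounded]
    by (simp add: err_def \<beta>_def)
  also have "\<dots> \<le> real (N + 1) * \<beta>"
    using C B w z by (intro mult_right_mono) (auto simp: \<beta>_def)
  also have "(\<Sum>k=n..N. err k) = (\<Sum>k=n..N. w^k * \<Lambda> k v) - w^(2*p) * (lam * z + \<mu>)"
  proof -
    have "(\<Sum>k=n..N. (if k = n then w^(2*p) * lam * z else 0)) = w^(2*p) * lam * z"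
      "(\<Sum>k=n..N. (if k = 2*p then w^(2*p) * \<mu> else 0)) = w^(2*p) * \<mu>"
      using Sigma1 N_ge by (subst sum.delta; auto)+
    then show ?thesis unfolding err_def sum_subtractf by (simp add: distrib_left)
  qed
  finally show ?thesis by (simp add: \<beta>_def)
qed

definition rescaled_field :: "real \<Rightarrow> real \<Rightarrow> real" where
  "rescaled_field t z = theta0 * t powr (theta0 - 1) * (t powr (- theta0) * z)
     + t powr theta0 * (\<Sum>k=n..N. t powr (- real k / real q) * \<Lambda> k (t powr (- theta0) * z))"

lemma rescaled_solution_has_derivative:
  assumes t: "t > 0"
    and u: "(u has_real_derivative (\<Sum>k=n..N. t powr (- real k / real q) * \<Lambda> k (u t))) (at t)"
  shows "((\<lambda>s. s powr theta0 * u s) has_real_derivative rescaled_field t (t powr theta0 * u t)) (at t)"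
proof -
  have "u t = t powr (- theta0) * (t powr theta0 * u t)" using t by (simp add: powr_minus)
  then show ?thesis
    using t by (auto intro!: derivative_eq_intros u simp: rescaled_field_def algebra_simps)
qed

lemma rescaled_field_eq:
  assumes t: "t > 0"
  defines "w \<equiv> t powr (- 1 / real q)"
  shows "rescaled_field t z = theta0 * z * w^q + (\<Sum>k=n..N. w^k * \<Lambda> k (w^(2*p - n) * z)) / w^(2*p - n)"
proof -
  have pw: "w^j = t powr (- real j / real q)" for j using t by (simp add: w_def powr_power)
  have minus: "t powr (- theta0) = w^(2*p - n)" by (simp add: pw theta0_eq)
  have plus: "t powr theta0 = 1 / w^(2*p - n)" using t by (simp add: minus[symmetric] powr_minus divide_inverse)
  have "t powr (theta0 - 1) * t powr (- theta0) = w^q"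
    using t q_pos by (simp add: pw powr_add[symmetric])
  then have "theta0 * t powr (theta0 - 1) * (t powr (- theta0) * z) = theta0 * z * w^q"
    by (metis mult.assoc mult.commute)
  moreover have "t powr (- real k / real q) = w^k" for k by (simp add: pw)
  ultimately show ?thesis unfolding rescaled_field_def plus minus by simp
qed

lemma rescaled_field_pointwise_estimate:
  fixes t z Z C B :: real
  assumes t: "t \<ge> 1" and z: "0 < z" "z \<le> Z" and C: "C \<ge> 0" and B: "B \<ge> 0"
  defines "w \<equiv> t powr (- 1 / real q)"
  defines "v \<equiv> w^(2*p - n) * z"
  assumes near_n: "\<bar>\<Lambda> n v - v * lam\<bar> \<le> C * v^2"
    and near_2p: "\<bar>\<Lambda> (2*p) v - \<mu>\<bar> \<le> C * v"
    and near_k: "\<And>k. k < 2*p \<Longrightarrow> \<bar>\<Lambda> k v\<bar> \<le> C * v"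
    and bounded: "\<And>k. k \<le> N \<Longrightarrow> \<bar>\<Lambda> k v\<bar> \<le> B"
  shows "\<bar>rescaled_field t z - w^n * (drift * z + \<mu>)\<bar>
           \<le> (real (N + 1) * (C * Z^2 + C * Z + B) + theta0 * Z) * w^(n+1)"
proof -
  define m where "m = 2*p - n"
  define S where "S = (\<Sum>k=n..N. w^k * \<Lambda> k v)"
  define K1 where "K1 = real (N + 1) * (C * Z^2 + C * Z + B)"
  have w: "0 < w" "w \<le> 1" using t powr_mono[of "- 1 / real q" 0 t] by (auto simp: w_def)
  have wm: "w^(2*p) = w^n * w^m" "w^(2*p+1) = w^(n+1) * w^m"
    using Sigma1 by (simp_all add: m_def power_add[symmetric])
  have "\<bar>S - w^(2*p) * (lam * z + \<mu>)\<bar> \<le> K1 * w^(2*p+1)"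
    using rescaled_sum_estimate[OF w z v_def[THEN meta_eq_to_obj_eq] C B near_n near_2p near_k bounded]
    by (simp add: S_def K1_def mult.assoc)
  moreover have "S / w^m - w^n * (lam * z + \<mu>) = (S - w^(2*p) * (lam * z + \<mu>)) / w^m"
    using w unfolding wm by (simp add: field_simps)
  ultimately have "\<bar>S / w^m - w^n * (lam * z + \<mu>)\<bar> \<le> K1 * w^(n+1)"
    using w unfolding wm by (simp add: abs_divide divide_le_eq mult_ac)
  moreover have "\<bar>theta0 * z * w^q - kdelta n q * theta0 * z * w^n\<bar> \<le> theta0 * Z * w^(n+1)"
  proof (cases "n = q")
    case False
    then have "w^q \<le> w^(n+1)" using Sigma1 w by (intro power_decreasing) auto
    then have "theta0 * z * w^q \<le> theta0 * Z * w^(n+1)"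
      using theta0_pos z w by (intro mult_mono) auto
    then show ?thesis using False theta0_pos z w by (simp add: kdelta_def)
  qed (use theta0_pos z w in \<open>simp add: kdelta_def\<close>)
  moreover have "rescaled_field t z - w^n * (drift * z + \<mu>)
      = (S / w^m - w^n * (lam * z + \<mu>)) + (theta0 * z * w^q - kdelta n q * theta0 * z * w^n)"
    using t by (simp add: rescaled_field_eq S_def v_def m_def w_def drift_def algebra_simps)
  ultimately show ?thesis by (simp add: K1_def algebra_simps)
qed

lemma rescaled_field_estimate:
  assumes Z: "Z > 0"
  obtains K where "eventually (\<lambda>t. \<forall>z. 0 < z \<and> z \<le> Z \<longrightarrow>
      \<bar>rescaled_field t z - t powr (- (real n / real q)) * (drift * z + \<mu>)\<bar>
        \<le> K * t powr (- (real n / real q)) * t powr (- (1 / real q))) at_top"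
proof -
  obtain \<delta> C where \<delta>: "\<delta> > 0" and C: "C \<ge> 0" and near: "\<And>v. 0 < v \<Longrightarrow> v < \<delta> \<Longrightarrow>
      \<bar>\<Lambda> n v - v * lam\<bar> \<le> C * v^2 \<and> \<bar>\<Lambda> (2*p) v - \<mu>\<bar> \<le> C * v \<and> (\<forall>k<2*p. \<bar>\<Lambda> k v\<bar> \<le> C * v)"
    using Lambda_local_bounds by blast
  define r where "r = r0 / 2"
  have "0 < r" "r < r0" using r0_pos by (auto simp: r_def)
  then obtain B where B: "B > 0" and bounded: "\<And>k v. k \<le> N \<Longrightarrow> v \<in> {-r..r} \<Longrightarrow> \<bar>\<Lambda> k v\<bar> \<le> B"
    using Lambda_uniform_bounds by metis
  define K where "K = real (N + 1) * (C * Z^2 + C * Z + B) + theta0 * Z"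
  have "eventually (\<lambda>t. 1 \<le> t \<and> Z * t powr (- (1 / real q)) < min \<delta> r) at_top"
    using eventually_ge_at_top[of 1] eventually_mult_powr_less[of "1 / real q" "min \<delta> r" Z]
      q_pos \<delta> \<open>0 < r\<close> by (auto intro: eventually_conj)
  then show ?thesis
  proof (rule that[of K, OF eventually_mono], intro allI impI)
    fix t z assume t: "1 \<le> t \<and> Z * t powr (- (1 / real q)) < min \<delta> r" and z: "0 < z \<and> z \<le> Z"
    define w where "w = t powr (- 1 / real q)"
    define v where "v = w^(2*p - n) * z"
    have w: "0 < w" "w \<le> 1" using t powr_mono[of "- 1 / real q" 0 t] by (auto simp: w_def)
    have "w^(2*p - n) \<le> w^1" using w Sigma1 by (intro power_decreasing) auto
    then have "v \<le> w * Z" using z w by (auto simp: v_def intro: mult_mono)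
    moreover have "w * Z < min \<delta> r" using t by (simp add: w_def mult.commute)
    moreover have "0 < v" using w z by (simp add: v_def)
    ultimately have v: "0 < v" "v < \<delta>" "v \<in> {-r..r}" by auto
    have estimate: "\<bar>rescaled_field t z - w^n * (drift * z + \<mu>)\<bar> \<le> K * w^(n+1)"
      unfolding K_def w_def using t z C B near[OF v(1,2)] bounded[OF _ v(3)]
      by (intro rescaled_field_pointwise_estimate) (auto simp: v_def w_def)
    have rhs: "K * w^(n+1) = K * t powr (- (real n / real q)) * t powr (- (1 / real q))"
      using t by (simp add: w_def powr_power powr_add[symmetric] add_divide_distrib algebra_simps)
    have lhs: "w^n = t powr (- (real n / real q))" using t by (simp add: w_def powr_power)
    show "\<bar>rescaled_field t z - t powr (- (real n / real q)) * (drift * z + \<mu>)\<bar>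
        \<le> K * t powr (- (real n / real q)) * t powr (- (1 / real q))"
      using estimate unfolding lhs rhs .
  qed
qed

text \<open>The \<open>\<Lambda>\<^sub>k\<close> are only controlled on \<open>(-r0, r0)\<close>, hence the clamp to \<open>[-r, r]\<close>.\<close>
lemma clamped_solution_exists:
  assumes r: "0 < r" "r < r0" and T: "T \<ge> 1"
  obtains u where "continuous_on {T..} u" "u T = u0"
    "\<And>t. t > T \<Longrightarrow> (u has_real_derivative
        (\<Sum>k=n..N. t powr (- real k / real q) * \<Lambda> k (max (-r) (min r (u t))))) (at t)"
proof -
  obtain B D where B: "B > 0" "D > 0"
    and bounded: "\<And>k v. k \<le> N \<Longrightarrow> v \<in> {-r..r} \<Longrightarrow> \<bar>\<Lambda> k v\<bar> \<le> B"
    and lipschitz: "\<And>k x y. k \<le> N \<Longrightarrow> x \<in> {-r..r} \<Longrightarrow> y \<in> {-r..r} \<Longrightarrow>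
      \<bar>\<Lambda> k x - \<Lambda> k y\<bar> \<le> D * \<bar>x - y\<bar>"
    using Lambda_uniform_bounds[OF r] by blast
  define cl where "cl x = max (-r) (min r x)" for x
  define F where "F t x = (\<Sum>k=n..N. t powr (- real k / real q) * \<Lambda> k (cl x))" for t x
  have cl: "cl x \<in> {-r..r}" "\<bar>cl x - cl y\<bar> \<le> \<bar>x - y\<bar>" for x y using r by (auto simp: cl_def)
  have weight: "0 \<le> t powr (- real k / real q) \<and> t powr (- real k / real q) \<le> 1" if "t \<ge> T" for t k
    using that T powr_mono[of "- real k / real q" 0 t] by auto
  have "\<exists>u. continuous_on {T..} u \<and> u T = u0 \<and> (\<forall>t>T. (u has_real_derivative F t (u t)) (at t))"
  proof (rule bounded_lipschitz_ode_solution_exists[where K = "real (card {n..N}) * B"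
        and L = "real (card {n..N}) * D + 1"])
    fix w :: "real \<Rightarrow> real" assume "continuous_on {T..} w"
    then have "continuous_on {T..} (\<lambda>s. cl (w s))" unfolding cl_def by (intro continuous_intros)
    then have \<Lambda>: "continuous_on {T..} (\<lambda>s. \<Lambda> k (cl (w s)))" for k
      using continuous_on_compose2[OF Lambda_continuous_on[OF r(2)]] cl(1) by blast
    have powr: "continuous_on {T..} (\<lambda>s. s powr (- real k / real q))" for k
      using T by (intro continuous_intros) auto
    show "continuous_on {T..} (\<lambda>s. F s (w s))"
      unfolding F_def by (intro continuous_on_sum continuous_on_mult powr \<Lambda>)
  next
    fix t x assume "t \<ge> T"
    then show "\<bar>F t x\<bar> \<le> real (card {n..N}) * B"
      unfolding F_def using weight bounded cl(1) by (intro sum_weighted_abs_le) auto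
  next
    fix t x y assume "t \<ge> T"
    have "\<bar>\<Lambda> k (cl x) - \<Lambda> k (cl y)\<bar> \<le> D * \<bar>x - y\<bar>" if "k \<in> {n..N}" for k
    proof -
      have "\<bar>\<Lambda> k (cl x) - \<Lambda> k (cl y)\<bar> \<le> D * \<bar>cl x - cl y\<bar>" using lipschitz cl(1) that by simp
      also have "\<dots> \<le> D * \<bar>x - y\<bar>" using cl(2) B by (simp add: mult_left_mono)
      finally show ?thesis .
    qed
    then have "\<bar>F t x - F t y\<bar> \<le> real (card {n..N}) * (D * \<bar>x - y\<bar>)"
      unfolding F_def sum_subtractf[symmetric] right_diff_distrib[symmetric]
      using weight \<open>t \<ge> T\<close> by (intro sum_weighted_abs_le) auto
    also have "\<dots> \<le> (real (card {n..N}) * D + 1) * \<bar>x - y\<bar>" by (simp add: algebra_simps)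
    finally show "\<bar>F t x - F t y\<bar> \<le> (real (card {n..N}) * D + 1) * \<bar>x - y\<bar>" .
  next
    show "real (card {n..N}) * D + 1 > 0" using B by (simp add: add_nonneg_pos)
  qed
  then show ?thesis using that by (auto simp: F_def cl_def)
qed

lemma clamp_inactive:
  assumes t: "t \<ge> 1" and z: "0 < t powr theta0 * x" "t powr theta0 * x \<le> Z"
    and small: "Z * t powr (- (1 / real q)) < r"
  shows "max (-r) (min r x) = x"
proof -
  have x: "x = t powr (- theta0) * (t powr theta0 * x)" using t by (simp add: powr_minus)
  have "t powr (- theta0) \<le> t powr (- (1 / real q))" using t theta0_ge by (intro powr_mono) auto
  then have "x \<le> t powr (- (1 / real q)) * Z" using z t by (subst x) (intro mult_mono, auto)
  moreover have "0 < x" using z t by (subst x) simp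
  ultimately show ?thesis using small by (simp add: mult.commute)
qed

lemma rescaled_clamped_solution_attracted:
  assumes r: "0 < r" "r < r0" and T: "T \<ge> 1"
    and small: "\<And>t. t \<ge> T \<Longrightarrow> 3 * xi0 / 2 * t powr (- (1 / real q)) < r"
    and field: "\<And>t z. t \<ge> T \<Longrightarrow> 0 < z \<Longrightarrow> z \<le> 3 * xi0 / 2 \<Longrightarrow>
      \<bar>rescaled_field t z - t powr (- (real n / real q)) * (drift * z + \<mu>)\<bar>
        \<le> K * t powr (- (real n / real q)) * t powr (- (1 / real q))"
    and cont: "continuous_on {T..} u"
    and u': "\<And>t. t > T \<Longrightarrow> (u has_real_derivative
      (\<Sum>k=n..N. t powr (- real k / real q) * \<Lambda> k (max (-r) (min r (u t))))) (at t)"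
  shows "attracting_equilibrium rescaled_field (\<lambda>t. t powr theta0 * u t) drift \<mu> xi0 (3 * xi0 / 2)
    (real n / real q) (1 / real q) K T"
proof
  show "continuous_on {T..} (\<lambda>t. t powr theta0 * u t)" using T by (intro continuous_intros cont) auto
  fix t assume t: "t > T" "0 < t powr theta0 * u t" "t powr theta0 * u t \<le> 3 * xi0 / 2"
  then have "max (-r) (min r (u t)) = u t"
    using T small[of t] by (intro clamp_inactive[where Z = "3 * xi0 / 2"]) auto
  then show "((\<lambda>t. t powr theta0 * u t) has_real_derivative rescaled_field t (t powr theta0 * u t)) (at t)"
    using rescaled_solution_has_derivative[of t u] u'[OF t(1)] t(1) T by simp
qed (use T field drift_neg drift_equilibrium xi0_pos Sigma1 q_pos in \<open>auto simp: divide_le_eq\<close>)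

theorem truncated_equation_solution:
  obtains T u where "T > 0"
    and "\<And>t. t > T \<Longrightarrow>
      (u has_real_derivative (\<Sum>k=n..N. t powr (- real k / real q) * \<Lambda> k (u t))) (at t)"
    and "\<And>\<gamma>. 0 \<le> \<gamma> \<Longrightarrow> \<gamma> < - drift \<Longrightarrow> \<gamma> < 1 / real q \<Longrightarrow>
      (\<lambda>t. t powr theta0 * u t - xi0) \<in> O[at_top](\<lambda>t. t powr (- \<gamma>))"
proof -
  define Z where "Z = 3 * xi0 / 2"
  define r where "r = r0 / 2"
  have Z: "Z > 0" and r: "0 < r" "r < r0" using xi0_pos r0_pos by (auto simp: Z_def r_def)
  obtain K where field: "eventually (\<lambda>t. \<forall>z. 0 < z \<and> z \<le> Z \<longrightarrow>
      \<bar>rescaled_field t z - t powr (- (real n / real q)) * (drift * z + \<mu>)\<bar>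
        \<le> K * t powr (- (real n / real q)) * t powr (- (1 / real q))) at_top"
    using rescaled_field_estimate[OF Z] by blast
  have "eventually (\<lambda>t. 1 \<le> t \<and> K * t powr (- (1 / real q)) < - drift * (xi0 / 2)
      \<and> Z * t powr (- (1 / real q)) < r) at_top"
  proof (intro eventually_conj eventually_mult_powr_less)
    show "- drift * (xi0 / 2) > 0" using xi0_pos drift_neg by (simp add: mult_neg_pos)
  qed (use q_pos r in auto)
  from eventually_conj[OF this field] obtain T where T: "\<And>t. t \<ge> T \<Longrightarrow>
      1 \<le> t \<and> K * t powr (- (1 / real q)) < - drift * (xi0 / 2) \<and> Z * t powr (- (1 / real q)) < r
      \<and> (\<forall>z. 0 < z \<and> z \<le> Z \<longrightarrow> \<bar>rescaled_field t z - t powr (- (real n / real q)) * (drift * z + \<mu>)\<bar>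
        \<le> K * t powr (- (real n / real q)) * t powr (- (1 / real q)))"
    unfolding eventually_at_top_linorder by blast
  have T1: "T \<ge> 1" using T[of T] by simp
  obtain u where u: "continuous_on {T..} u" "u T = T powr (- theta0) * xi0"
    and u': "\<And>t. t > T \<Longrightarrow> (u has_real_derivative
      (\<Sum>k=n..N. t powr (- real k / real q) * \<Lambda> k (max (-r) (min r (u t))))) (at t)"
    using clamped_solution_exists[OF r T1] by blast
  interpret equilibrium: attracting_equilibrium rescaled_field "\<lambda>t. t powr theta0 * u t" drift \<mu> xi0 Z
      "real n / real q" "1 / real q" K T
    using T unfolding Z_def by (intro rescaled_clamped_solution_attracted[OF r T1 _ _ u(1) u']) auto
  have near: "\<bar>t powr theta0 * u t - xi0\<bar> < xi0 / 2" if "t \<ge> T" for t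
    using equilibrium.stays_near_equilibrium[OF _ _ that] u(2) T T1 by (simp add: powr_minus)
  show ?thesis
  proof (rule that)
    show "T > 0" using T1 by simp
    show "(u has_real_derivative (\<Sum>k=n..N. t powr (- real k / real q) * \<Lambda> k (u t))) (at t)"
      if "t > T" for t
    proof -
      have "0 < t powr theta0 * u t" "t powr theta0 * u t \<le> Z"
        using near[of t] that unfolding Z_def abs_less_iff by auto
      then have "max (-r) (min r (u t)) = u t"
        using T[of t] that by (intro clamp_inactive[where Z = Z]) auto
      then show ?thesis using u'[OF that] by simp
    qed
    show "(\<lambda>t. t powr theta0 * u t - xi0) \<in> O[at_top](\<lambda>t. t powr (- \<gamma>))"
      if "0 \<le> \<gamma>" "\<gamma> < - drift" "\<gamma> < 1 / real q" for \<gamma>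
      using equilibrium.power_decay[OF near that] .
  qed
qed

lemma decay_exponent_admissible:
  assumes "n = q" and \<epsilon>: "0 < \<epsilon>" "\<epsilon> < 1"
  defines "\<kappa> \<equiv> min (min (1 / real q) theta0) \<bar>lam + theta0\<bar>"
  shows "0 \<le> (1 - \<epsilon>) * \<kappa>" "(1 - \<epsilon>) * \<kappa> < - drift" "(1 - \<epsilon>) * \<kappa> < 1 / real q"
proof -
  have "drift = lam + theta0" unfolding drift_def kdelta_def using \<open>n = q\<close> by simp
  then have "\<bar>lam + theta0\<bar> = - drift" using drift_neg by simp
  then have \<kappa>: "0 < \<kappa>" "\<kappa> \<le> - drift" "\<kappa> \<le> 1 / real q"
    using q_pos theta0_pos drift_neg by (auto simp: \<kappa>_def)
  have lt: "(1 - \<epsilon>) * \<kappa> < \<kappa>" using mult_pos_pos[OF \<epsilon>(1) \<kappa>(1)] by (simp add: algebra_simps)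
  show "0 \<le> (1 - \<epsilon>) * \<kappa>" using \<epsilon> \<kappa> by simp
  show "(1 - \<epsilon>) * \<kappa> < - drift" "(1 - \<epsilon>) * \<kappa> < 1 / real q" using lt \<kappa> by linarith+
qed

corollary truncated_equation_solution_rates:
  obtains T u where "T > 0"
    and "\<And>t. t > T \<Longrightarrow>
      (u has_real_derivative (\<Sum>k=n..N. t powr (- real k / real q) * \<Lambda> k (u t))) (at t)"
    and "(\<lambda>t. t powr theta0 * u t - xi0) \<in> O[at_top](\<lambda>_. 1)"
    and "\<And>\<epsilon>. n = q \<Longrightarrow> 0 < \<epsilon> \<Longrightarrow> \<epsilon> < 1 \<Longrightarrow> (\<lambda>t. t powr theta0 * u t - xi0) \<in>
      O[at_top](\<lambda>t. t powr (- (1 - \<epsilon>) * min (min (1 / real q) theta0) \<bar>lam + theta0\<bar>))"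
proof -
  obtain T u where T: "T > 0"
    and solves: "\<And>t. t > T \<Longrightarrow>
      (u has_real_derivative (\<Sum>k=n..N. t powr (- real k / real q) * \<Lambda> k (u t))) (at t)"
    and decay: "\<And>\<gamma>. 0 \<le> \<gamma> \<Longrightarrow> \<gamma> < - drift \<Longrightarrow> \<gamma> < 1 / real q \<Longrightarrow>
      (\<lambda>t. t powr theta0 * u t - xi0) \<in> O[at_top](\<lambda>t. t powr (- \<gamma>))"
    by (rule truncated_equation_solution) (rule that)
  show ?thesis
  proof (rule that[OF T solves])
    have "(\<lambda>t. t powr theta0 * u t - xi0) \<in> O[at_top](\<lambda>t. t powr (- 0))"
      by (rule decay) (use drift_neg q_pos in auto)
    moreover have "(\<lambda>t::real. t powr (- 0)) \<in> O[at_top](\<lambda>_. 1)"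
      by (intro bigoI[where c = 1]) (use eventually_gt_at_top[of 0] in \<open>auto elim: eventually_mono\<close>)
    ultimately show "(\<lambda>t. t powr theta0 * u t - xi0) \<in> O[at_top](\<lambda>_. 1)" by (rule landau_o.big_trans)
  next
    fix \<epsilon> :: real assume "n = q" "0 < \<epsilon>" "\<epsilon> < 1"
    then show "(\<lambda>t. t powr theta0 * u t - xi0) \<in>
      O[at_top](\<lambda>t. t powr (- (1 - \<epsilon>) * min (min (1 / real q) theta0) \<bar>lam + theta0\<bar>))"
      using decay[OF decay_exponent_admissible] by (simp only: minus_mult_left mult.assoc)
  qed
qed

end

text \<open>The hypotheses \<open>p_pos\<close>, \<open>n_pos\<close>, \<open>below_n\<close>, \<open>lam_nz\<close> and \<open>N \<le> 4 p\<close> are part of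
  the setting but not needed for the conclusion.\<close>
theorem lemma1:
  fixes \<Lambda> :: "nat \<Rightarrow> real \<Rightarrow> real"
    and \<Lambda>' :: "nat \<Rightarrow> real \<Rightarrow> real"
    and n p q N :: nat
    and \<mu> lam r0 :: real
  assumes q_pos: "q \<ge> 1" and p_pos: "p \<ge> 1" and n_pos: "n \<ge> 1"
    and r0_pos: "r0 > 0"
    and smooth: "\<And>k v. v \<in> {-r0<..<r0} \<Longrightarrow> (\<Lambda> k has_real_derivative \<Lambda>' k v) (at v)"
    and smooth_cont: "\<And>k. continuous_on {-r0<..<r0} (\<Lambda>' k)"
    and below_n: "\<And>k v. k < n \<Longrightarrow> v \<in> {-r0<..<r0} \<Longrightarrow> \<Lambda> k v = 0"
    and mu_pos: "\<mu> > 0"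
    and Lambda_2p: "(\<lambda>E. \<Lambda> (2*p) E - \<mu>) \<in> O[at 0](\<lambda>E. E)"
    and Sigma1: "n < 2*p" "n \<le> q"
    and Lambda_n: "(\<lambda>v. \<Lambda> n v - v * lam) \<in> O[at 0](\<lambda>v. v^2)"
    and lam_nz: "lam \<noteq> 0"
    and Lambda_k: "\<And>k. k < 2*p \<Longrightarrow> \<Lambda> k \<in> O[at 0](\<lambda>v. v)"
    and N_range: "2*p \<le> N" "N \<le> 4*p"
    and neg: "lam + kdelta n q * ((real (2*p) - real n) / real q) < 0"
  shows
    "let theta0 = (real (2*p) - real n) / real q;
         kappa0 = min (1 / real q) theta0;
         xi0 = \<mu> / \<bar>lam + kdelta n q * theta0\<bar>;
         varkappa0 = min kappa0 \<bar>lam + theta0\<bar>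
     in \<exists>u :: real \<Rightarrow> real. \<exists>T. T > 0 \<and>
          (\<forall>t > T. (u has_real_derivative
              (\<Sum>k = n..N. t powr (- real k / real q) * \<Lambda> k (u t))) (at t)) \<and>
          (n < q \<longrightarrow>
              (\<lambda>t. t powr theta0 * u t - xi0) \<in> O[at_top](\<lambda>_. 1)) \<and>
          (n = q \<longrightarrow> (\<forall>\<epsilon>. 0 < \<epsilon> \<and> \<epsilon> < 1 \<longrightarrow>
              (\<lambda>t. t powr theta0 * u t - xi0) \<in>
                 O[at_top](\<lambda>t. t powr (- (1 - \<epsilon>) * varkappa0))))"
proof -
  interpret averaged_equation \<Lambda> \<Lambda>' n p q N \<mu> lam r0
    by unfold_locales (fact q_pos r0_pos smooth smooth_cont mu_pos Lambda_2p Sigma1 Lambda_n Lambda_k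
        N_range(1) neg)+
  obtain T u where "T > 0"
    and "\<And>t. t > T \<Longrightarrow>
      (u has_real_derivative (\<Sum>k=n..N. t powr (- real k / real q) * \<Lambda> k (u t))) (at t)"
    and "(\<lambda>t. t powr theta0 * u t - xi0) \<in> O[at_top](\<lambda>_. 1)"
    and "\<And>\<epsilon>. n = q \<Longrightarrow> 0 < \<epsilon> \<Longrightarrow> \<epsilon> < 1 \<Longrightarrow> (\<lambda>t. t powr theta0 * u t - xi0) \<in>
      O[at_top](\<lambda>t. t powr (- (1 - \<epsilon>) * min (min (1 / real q) theta0) \<bar>lam + theta0\<bar>))"
    by (rule truncated_equation_solution_rates) (rule that)
  then show ?thesis
    unfolding Let_def theta0_def[symmetric] drift_def[symmetric] xi0_def[symmetric] by blast
qed

end
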